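(* Under the setting below, assume $G$ is convex and the sampling in Algorithm BC is essentially cyclic: there exists $T\ge1$ such that every index $i\in[N]$ belongs to at least one of the sets $I^{k+1},\dots,I^{k+T}$ for every $k\ge0$. Then (surely): (i) $\sum_k\|\bm x^k-\bm z^k\|^2<\infty$; (ii) $\Phi(\bm z^k)\to\Phi_\star:=\lim_k\Phi^{\mathrm{FB}}_\Gamma(\bm x^k)$ (finite, $\ge\min\Phi$); (iii) $(\bm x^k)$ and $(\bm z^k)$ have the same cluster points, each such cluster point $\bm x^\star$ satisfies $0\in\hat\partial\Phi(\bm x^\star)$ and $\Phi(\bm x^\star)=\Phi^{\mathrm{FB}}_\Gamma(\bm x^\star)=\Phi_\star$.
   Context: Setting: $N\ge1$, $n=\sum_{i=1}^N n_i$, $\bm x=(x_1,\dots,x_N)$ with $x_i\in\mathbb R^{n_i}$; $\Phi=F+G$ with $F(\bm x)=\frac1N\sum_i f_i(x_i)$, each $f_i:\mathbb R^{n_i}\to\mathbb R$ differentiable with $L_{f_i}$-Lipschitz gradient, $G:\mathbb R^n\to\mathbb R\cup\{+\infty\}$ proper lsc, $\arg\min\Phi\ne\emptyset$. $\gamma_i\in(0,N/L_{f_i})$, $\Gamma=\operatorname{blockdiag}(\gamma_1I_{n_1},\dots,\gamma_NI_{n_N})$, $\|x\|_V^2=\langle x,Vx\rangle$, $\operatorname{prox}_G^{V}(u)=\arg\min_w\{G(w)+\frac12\|w-u\|_V^2\}$, $\mathbf T(\bm x)=\operatorname{prox}_G^{\Gamma^{-1}}(\bm x-\Gamma\nabla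 F(\bm x))$. Forward-backward envelope: $\Phi^{\mathrm{FB}}_\Gamma(\bm x):=\inf_{\bm w}\{F(\bm x)+\langle\nabla F(\bm x),\bm w-\bm x\rangle+G(\bm w)+\frac12\|\bm w-\bm x\|^2_{\Gamma^{-1}}\}$. Algorithm BC: given $\bm x^0\in\mathbb R^n$, for $k=0,1,\dots$: pick $\bm z^k\in\mathbf T(\bm x^k)$; select $I^{k+1}\subseteq[N]$; set $x_i^{k+1}=z_i^k$ for $i\in I^{k+1}$ and $x_i^{k+1}=x_i^k$ otherwise. $\hat\partial$ denotes the regular (Fréchet) subdifferential. *)

theory Defs
  imports "HOL-Analysis.Analysis" "HOL-Library.Extended_Real"
begin

text \<open>Block structure: the coordinates of \<open>real^'n\<close> are partitioned into N blocks
  by a block-assignment map \<open>blk :: 'n \<Rightarrow> nat\<close> (coordinate j belongs to block \<open>blk j\<close>).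
  Blocks are numbered 0..N-1.\<close>

definition blkproj :: "('n::finite \<Rightarrow> nat) \<Rightarrow> nat \<Rightarrow> real^'n \<Rightarrow> real^'n" where
  "blkproj blk i x = (\<chi> j. if blk j = i then x $ j else 0)"

text \<open>Smooth part F(x) = (1/N) sum_i f_i(x_i) and its gradient (g i is the gradient of f i).\<close>
definition Fsum :: "nat \<Rightarrow> (nat \<Rightarrow> real^'n::finite \<Rightarrow> real) \<Rightarrow> real^'n \<Rightarrow> real" where
  "Fsum N f x = (1 / real N) * (\<Sum>i<N. f i x)"

definition gradF :: "nat \<Rightarrow> (nat \<Rightarrow> real^'n::finite \<Rightarrow> real^'n) \<Rightarrow> real^'n \<Rightarrow> real^'n" where
  "gradF N g x = (1 / real N) *\<^sub>R (\<Sum>i<N. g i x)"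

text \<open>Gamma = blockdiag(gam_1 I, ..., gam_N I); scaled maps and norms.\<close>
definition Gam_mul :: "('n::finite \<Rightarrow> nat) \<Rightarrow> (nat \<Rightarrow> real) \<Rightarrow> real^'n \<Rightarrow> real^'n" where
  "Gam_mul blk gam v = (\<chi> j. gam (blk j) * v $ j)"

definition sqnorm_Gam_inv :: "('n::finite \<Rightarrow> nat) \<Rightarrow> (nat \<Rightarrow> real) \<Rightarrow> real^'n \<Rightarrow> real" where
  "sqnorm_Gam_inv blk gam w = (\<Sum>j\<in>UNIV. (w $ j)^2 / gam (blk j))"

definition prox_Gam :: "('n::finite \<Rightarrow> nat) \<Rightarrow> (nat \<Rightarrow> real) \<Rightarrow> (real^'n \<Rightarrow> ereal) \<Rightarrow> real^'n \<Rightarrow> (real^'n) set" where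
  "prox_Gam blk gam G u =
     {w. \<forall>v. G w + ereal (sqnorm_Gam_inv blk gam (w - u) / 2) \<le> G v + ereal (sqnorm_Gam_inv blk gam (v - u) / 2)}"

definition FB_op :: "nat \<Rightarrow> ('n::finite \<Rightarrow> nat) \<Rightarrow> (nat \<Rightarrow> real) \<Rightarrow> (nat \<Rightarrow> real^'n \<Rightarrow> real^'n)
                     \<Rightarrow> (real^'n \<Rightarrow> ereal) \<Rightarrow> real^'n \<Rightarrow> (real^'n) set" where
  "FB_op N blk gam g G x = prox_Gam blk gam G (x - Gam_mul blk gam (gradF N g x))"

definition FBE :: "nat \<Rightarrow> ('n::finite \<Rightarrow> nat) \<Rightarrow> (nat \<Rightarrow> real) \<Rightarrow> (nat \<Rightarrow> real^'n \<Rightarrow> real)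
                   \<Rightarrow> (nat \<Rightarrow> real^'n \<Rightarrow> real^'n) \<Rightarrow> (real^'n \<Rightarrow> ereal) \<Rightarrow> real^'n \<Rightarrow> ereal" where
  "FBE N blk gam f g G x =
     (INF w. ereal (Fsum N f x + gradF N g x \<bullet> (w - x)) + G w
             + ereal (sqnorm_Gam_inv blk gam (w - x) / 2))"

definition proper_fun :: "('a \<Rightarrow> ereal) \<Rightarrow> bool" where
  "proper_fun G \<longleftrightarrow> (\<forall>x. G x \<noteq> -\<infinity>) \<and> (\<exists>x. G x \<noteq> \<infinity>)"

definition lsc_fun :: "('a::topological_space \<Rightarrow> ereal) \<Rightarrow> bool" where
  "lsc_fun G \<longleftrightarrow> (\<forall>c. closed {x. G x \<le> c})"

definition convex_ext :: "('a::real_vector \<Rightarrow> ereal) \<Rightarrow> bool" where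
  "convex_ext G \<longleftrightarrow> (\<forall>x y t. 0 \<le> t \<and> t \<le> 1 \<longrightarrow>
      G ((1 - t) *\<^sub>R x + t *\<^sub>R y) \<le> ereal (1 - t) * G x + ereal t * G y)"

definition frechet_subdiff :: "('a::real_inner \<Rightarrow> ereal) \<Rightarrow> 'a \<Rightarrow> 'a set" where
  "frechet_subdiff \<Phi> x = {v. \<bar>\<Phi> x\<bar> \<noteq> \<infinity> \<and>
      (\<forall>e>0. \<exists>d>0. \<forall>y. norm (y - x) < d \<longrightarrow>
          \<Phi> y \<ge> \<Phi> x + ereal (v \<bullet> (y - x) - e * norm (y - x)))}"

definition cluster_points :: "(nat \<Rightarrow> 'a::topological_space) \<Rightarrow> 'a set" where
  "cluster_points s = {p. \<exists>r. strict_mono r \<and> (s \<circ> r) \<longlonglongrightarrow> p}"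

end

theory Submission
  imports Defs
begin

text \<open>
  The forward-backward envelope is a Lyapunov function for the block-coordinate method.
  Because F is block separable, the quadratic model defining the envelope splits into one
  term per block, and the descent lemma shows that overwriting any set of blocks of x by
  the corresponding blocks of z in T(x) lowers the envelope by at least c |x' - x|^2, where
  c = min_i (1/(2 gamma_i) - L_i/(2N)) > 0. The envelope dominates Phi(z) >= min Phi, so it
  converges and the steps are square summable. Convexity of G makes the proximal map
  nonexpansive, hence T Lipschitz; as every block is refreshed in every window of T iterations,
  each coordinate of x^k - z^k is controlled by the steps in a window of length T, which
  gives (i). The envelope and Phi(z^k) differ by O(|x^k - z^k|^2), giving (ii). Finally the
  graph of T is closed (G is lsc), so cluster points are fixed points of T, and a fixed
  point minimizes its own model, which majorizes Phi up to a quadratic term: this is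
  Frechet stationarity.
\<close>

section \<open>Smooth and lower semicontinuous functions\<close>

lemma lipschitz_gradient_quadratic_bounds:
  fixes f :: "'a::real_inner \<Rightarrow> real"
  assumes grad: "\<And>w. (f has_derivative (\<lambda>h. g w \<bullet> h)) (at w)"
    and lip: "\<And>u v. norm (g u - g v) \<le> L * norm (u - v)"
  shows "f y \<le> f x + g x \<bullet> (y - x) + L / 2 * (norm (y - x))\<^sup>2"
    and "f x + g x \<bullet> (y - x) - L / 2 * (norm (y - x))\<^sup>2 \<le> f y"
proof -
  define d where "d = y - x"
  define K where "K = L / 2 * (norm d)\<^sup>2"
  define c where "c = g x \<bullet> d"
  have deriv: "((\<lambda>t. f (x + t *\<^sub>R d)) has_real_derivative g (x + t *\<^sub>R d) \<bullet> d) (at t)" for t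
  proof -
    have "((\<lambda>t. x + t *\<^sub>R d) has_derivative (\<lambda>s. s *\<^sub>R d)) (at t)"
      by (auto intro!: derivative_eq_intros)
    from has_derivative_compose[OF this grad]
    show ?thesis by (simp add: has_field_derivative_def mult_commute_abs)
  qed
  have slope: "\<bar>g (x + t *\<^sub>R d) \<bullet> d - c\<bar> \<le> 2 * K * t" if "0 \<le> t" for t
  proof -
    have "\<bar>(g (x + t *\<^sub>R d) - g x) \<bullet> d\<bar> \<le> norm (g (x + t *\<^sub>R d) - g x) * norm d"
      by (rule Cauchy_Schwarz_ineq2)
    also have "\<dots> \<le> L * norm (t *\<^sub>R d) * norm d"
      using lip[of "x + t *\<^sub>R d" x] by (intro mult_right_mono) auto
    finally show ?thesis
      using that by (simp add: c_def K_def inner_diff_left power2_eq_square mult_ac)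
  qed
  have up: "((\<lambda>t. f (x + t *\<^sub>R d) - t * c - K * t\<^sup>2) has_real_derivative
              g (x + t *\<^sub>R d) \<bullet> d - c - 2 * K * t) (at t)"
    and lo: "((\<lambda>t. f (x + t *\<^sub>R d) - t * c + K * t\<^sup>2) has_real_derivative
              g (x + t *\<^sub>R d) \<bullet> d - c + 2 * K * t) (at t)" for t
    by (auto intro!: derivative_eq_intros deriv)
  have "f (x + 1 *\<^sub>R d) - 1 * c - K * 1\<^sup>2 \<le> f (x + 0 *\<^sub>R d) - 0 * c - K * 0\<^sup>2"
    using slope up
    by (intro DERIV_nonpos_imp_nonincreasing[of 0 1 "\<lambda>t. f (x + t *\<^sub>R d) - t * c - K * t\<^sup>2"])
       (fastforce simp: abs_le_iff)+
  then show "f y \<le> f x + g x \<bullet> (y - x) + L / 2 * (norm (y - x))\<^sup>2"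
    by (simp add: d_def K_def c_def)
  have "f (x + 0 *\<^sub>R d) - 0 * c + K * 0\<^sup>2 \<le> f (x + 1 *\<^sub>R d) - 1 * c + K * 1\<^sup>2"
    using slope lo
    by (intro DERIV_nonneg_imp_nondecreasing[of 0 1 "\<lambda>t. f (x + t *\<^sub>R d) - t * c + K * t\<^sup>2"])
       (fastforce simp: abs_le_iff)+
  then show "f x + g x \<bullet> (y - x) - L / 2 * (norm (y - x))\<^sup>2 \<le> f y"
    by (simp add: d_def K_def c_def)
qed

lemma lsc_fun_tendsto_le:
  assumes lsc: "lsc_fun G" and s: "s \<longlonglongrightarrow> p"
    and le: "\<And>k. G (s k) \<le> ereal (h k)" and h: "h \<longlonglongrightarrow> c"
  shows "G p \<le> ereal c"
proof (rule ereal_le_epsilon2)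
  fix e :: real assume "0 < e"
  with h have "eventually (\<lambda>k. h k < c + e) sequentially"
    by (intro order_tendstoD) auto
  then have "eventually (\<lambda>k. s k \<in> {y. G y \<le> ereal (c + e)}) sequentially"
    by (rule eventually_mono) (metis le ereal_less_eq(3) less_imp_le order.trans mem_Collect_eq)
  moreover have "closed {y. G y \<le> ereal (c + e)}"
    using lsc by (simp add: lsc_fun_def)
  ultimately show "G p \<le> ereal c + ereal e"
    using Lim_in_closed_set s by fastforce
qed

section \<open>Convex proximal maps\<close>

lemma convex_prox_variational_ineq:
  fixes G :: "'a::real_inner \<Rightarrow> ereal" and S :: "'a \<Rightarrow> 'b::real_inner"
  assumes convex: "convex_ext G" and S: "linear S"
    and zmin: "\<forall>w. G z + ereal ((norm (S (z - u)))\<^sup>2 / 2) \<le> G w + ereal ((norm (S (w - u)))\<^sup>2 / 2)"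
    and Gz: "G z = ereal a" and Gv: "G v = ereal b"
  shows "a \<le> b + S (z - u) \<bullet> S (v - z)"
proof -
  define K where "K = (norm (S (v - z)))\<^sup>2 / 2"
  have along_segment: "a \<le> b + S (z - u) \<bullet> S (v - z) + t * K" if t: "0 < t" "t \<le> 1" for t
  proof -
    define w where "w = (1 - t) *\<^sub>R z + t *\<^sub>R v"
    have "G w \<le> ereal (1 - t) * G z + ereal t * G v"
      using convex t unfolding convex_ext_def w_def by simp
    then have Gw: "G w \<le> ereal ((1 - t) * a + t * b)"
      by (simp add: Gz Gv)
    have "S (w - u) = S (z - u) + t *\<^sub>R S (v - z)"
      unfolding w_def by (simp add: linear_diff[OF S, symmetric] linear_scale[OF S, symmetric]
        linear_add[OF S, symmetric] algebra_simps)
    then have Sw: "(norm (S (w - u)))\<^sup>2 = (norm (S (z - u)))\<^sup>2 + 2 * t * (S (z - u) \<bullet> S (v - z)) + t\<^sup>2 * (2 * K)"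
      unfolding K_def power2_norm_eq_inner
      by (simp add: inner_add_left inner_add_right inner_commute power2_eq_square algebra_simps)
    have "ereal (a + (norm (S (z - u)))\<^sup>2 / 2) \<le> G w + ereal ((norm (S (w - u)))\<^sup>2 / 2)"
      using zmin Gz by (metis plus_ereal.simps(1))
    also have "\<dots> \<le> ereal ((1 - t) * a + t * b) + ereal ((norm (S (w - u)))\<^sup>2 / 2)"
      using Gw by (rule add_right_mono)
    finally have "a + (norm (S (z - u)))\<^sup>2 / 2 \<le> (1 - t) * a + t * b + (norm (S (w - u)))\<^sup>2 / 2"
      by simp
    moreover have "(1 - t) * a + t * b + (norm (S (w - u)))\<^sup>2 / 2 - (a + (norm (S (z - u)))\<^sup>2 / 2)
        = t * (b + S (z - u) \<bullet> S (v - z) + t * K) - t * a"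
      unfolding Sw by (simp add: algebra_simps power2_eq_square)
    ultimately have "t * a \<le> t * (b + S (z - u) \<bullet> S (v - z) + t * K)"
      by linarith
    then show ?thesis using t by simp
  qed
  have "((\<lambda>t. b + S (z - u) \<bullet> S (v - z) + t * K) \<longlongrightarrow> b + S (z - u) \<bullet> S (v - z) + 0 * K) (at_right 0)"
    by (intro tendsto_intros)
  moreover have "eventually (\<lambda>t. a \<le> b + S (z - u) \<bullet> S (v - z) + t * K) (at_right 0)"
    by (rule eventually_mono[OF eventually_at_right_real[of 0 1]]) (auto intro: along_segment)
  ultimately show ?thesis
    by (simp add: tendsto_lowerbound)
qed

lemma convex_prox_nonexpansive:
  fixes G :: "'a::real_inner \<Rightarrow> ereal" and S :: "'a \<Rightarrow> 'b::real_inner"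
  assumes convex: "convex_ext G" and S: "linear S"
    and z1: "\<forall>w. G z1 + ereal ((norm (S (z1 - u1)))\<^sup>2 / 2) \<le> G w + ereal ((norm (S (w - u1)))\<^sup>2 / 2)"
    and z2: "\<forall>w. G z2 + ereal ((norm (S (z2 - u2)))\<^sup>2 / 2) \<le> G w + ereal ((norm (S (w - u2)))\<^sup>2 / 2)"
    and G1: "G z1 = ereal a1" and G2: "G z2 = ereal a2"
  shows "norm (S (z1 - z2)) \<le> norm (S (u1 - u2))"
proof -
  define p where "p = S z1 - S z2"
  define r where "r = S u1 - S u2"
  have "0 \<le> S (z1 - u1) \<bullet> S (z2 - z1) + S (z2 - u2) \<bullet> S (z1 - z2)"
    using convex_prox_variational_ineq[OF convex S z1 G1 G2]
      convex_prox_variational_ineq[OF convex S z2 G2 G1] by simp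
  also have "\<dots> = r \<bullet> p - p \<bullet> p"
    unfolding p_def r_def linear_diff[OF S]
    by (simp add: inner_diff_left inner_diff_right inner_commute algebra_simps)
  finally have "(norm p)\<^sup>2 \<le> norm r * norm p"
    using norm_cauchy_schwarz[of r p] by (simp add: power2_norm_eq_inner)
  then have "norm p \<le> norm r"
    by (cases "norm p = 0") (auto simp: power2_eq_square)
  then show ?thesis
    by (simp add: p_def r_def linear_diff[OF S])
qed

lemma cluster_point_common_subseq:
  fixes x z :: "nat \<Rightarrow> 'a::real_normed_vector"
  assumes diff: "(\<lambda>k. x k - z k) \<longlonglongrightarrow> 0" and p: "p \<in> cluster_points x"
  obtains r where "strict_mono r" "(\<lambda>k. x (r k)) \<longlonglongrightarrow> p" "(\<lambda>k. z (r k)) \<longlonglongrightarrow> p"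
proof -
  obtain r where r: "strict_mono r" "(\<lambda>k. x (r k)) \<longlonglongrightarrow> p"
    using p by (auto simp: cluster_points_def o_def)
  have "(\<lambda>k. x (r k) - (x (r k) - z (r k))) \<longlonglongrightarrow> p - 0"
    using LIMSEQ_subseq_LIMSEQ[OF diff r(1)] r(2) by (intro tendsto_diff) (auto simp: o_def)
  then show ?thesis using that r by simp
qed

lemma cluster_points_eq_if_diff_tendsto_zero:
  fixes x z :: "nat \<Rightarrow> 'a::real_normed_vector"
  assumes diff: "(\<lambda>k. x k - z k) \<longlonglongrightarrow> 0"
  shows "cluster_points x = cluster_points z"
proof -
  have diff': "(\<lambda>k. z k - x k) \<longlonglongrightarrow> 0"
    using tendsto_minus[OF diff] by simp
  have "p \<in> cluster_points b"
    if "(\<lambda>k. a k - b k) \<longlonglongrightarrow> 0" "p \<in> cluster_points a" for a b :: "nat \<Rightarrow> 'a" and p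
    using cluster_point_common_subseq[OF that] by (auto simp: cluster_points_def o_def)
  from this[OF diff] this[OF diff'] show ?thesis by blast
qed

lemma decreasing_bounded_below_summable:
  fixes \<phi> d :: "nat \<Rightarrow> real"
  assumes dec: "\<And>k. \<phi> (Suc k) + c * d k \<le> \<phi> k" and c: "c > 0"
    and d: "\<And>k. 0 \<le> d k" and bdd: "\<And>k. m \<le> \<phi> k"
  shows "convergent \<phi>" and "summable d"
proof -
  have "decseq \<phi>"
    using dec c d by (intro decseq_SucI) (smt (verit) mult_nonneg_nonneg)
  then obtain l where l: "\<phi> \<longlonglongrightarrow> l"
    using decseq_convergent bdd by metis
  then show "convergent \<phi>"
    by (auto simp: convergent_def)
  show "summable d"
  proof (rule summable_comparison_test)
    show "summable (\<lambda>k. (\<phi> k - \<phi> (Suc k)) / c)"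
      by (rule summable_divide[OF telescope_summable'[OF l]])
    show "\<exists>N. \<forall>k\<ge>N. norm (d k) \<le> (\<phi> k - \<phi> (Suc k)) / c"
      using dec c d by (auto simp: field_simps)
  qed
qed

lemma norm_diff_le_sum_steps:
  fixes x :: "nat \<Rightarrow> 'a::real_normed_vector"
  shows "norm (x (k + m) - x k) \<le> (\<Sum>s<m. norm (x (Suc (k + s)) - x (k + s)))"
proof (induction m)
  case (Suc m)
  have "norm (x (k + Suc m) - x k) \<le> norm (x (Suc (k + m)) - x (k + m)) + norm (x (k + m) - x k)"
    using norm_triangle_ineq[of "x (Suc (k + m)) - x (k + m)" "x (k + m) - x k"] by simp
  with Suc show ?case by simp
qed simp

lemma essentially_cyclic_coordinate_bound:
  fixes x z :: "nat \<Rightarrow> real^'n"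
  assumes upd: "\<And>k j. j \<in> U (Suc k) \<Longrightarrow> x (Suc k) $ j = z k $ j"
    and cyclic: "\<And>k j. \<exists>t\<in>{1..T}. j \<in> U (k + t)"
    and lip: "\<And>k l. norm (z k - z l) \<le> K * norm (x k - x l)" and K: "0 \<le> K"
  shows "\<bar>(x k - z k) $ j\<bar> \<le> (2 + K) * (\<Sum>s<T. norm (x (Suc (k + s)) - x (k + s)))"
proof -
  define E where "E = (\<Sum>s<T. norm (x (Suc (k + s)) - x (k + s)))"
  obtain t where t: "t \<in> {1..T}" "j \<in> U (k + t)"
    using cyclic by blast
  define m where "m = t - 1"
  have m: "k + t = Suc (k + m)" "m < T"
    using t by (auto simp: m_def)
  text \<open>Coordinate j was overwritten by z at step k + m, so x k - z k telescopes through it.\<close>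
  have split: "(x k - z k) $ j = (x k - x (k + m)) $ j + (x (k + m) - x (Suc (k + m))) $ j
      + (z (k + m) - z k) $ j"
    using upd[where k="k + m" and j=j] t m by simp
  have "(\<Sum>s<m. norm (x (Suc (k + s)) - x (k + s))) \<le> E"
    unfolding E_def by (rule sum_mono2) (use m in auto)
  then have drift: "norm (x (k + m) - x k) \<le> E"
    using norm_diff_le_sum_steps[of x k m] by linarith
  have step: "norm (x (Suc (k + m)) - x (k + m)) \<le> E"
    unfolding E_def using m by (intro member_le_sum) auto
  have "\<bar>(z (k + m) - z k) $ j\<bar> \<le> K * E"
    using component_le_norm_cart[of "z (k + m) - z k" j] lip[of "k + m" k]
      mult_left_mono[OF drift K] by linarith
  moreover have "\<bar>(x k - x (k + m)) $ j\<bar> \<le> E"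
    using component_le_norm_cart[of "x k - x (k + m)" j] drift by (simp add: norm_minus_commute)
  moreover have "\<bar>(x (k + m) - x (Suc (k + m))) $ j\<bar> \<le> E"
    using component_le_norm_cart[of "x (k + m) - x (Suc (k + m))" j] step
    by (simp add: norm_minus_commute)
  ultimately show ?thesis
    unfolding split E_def[symmetric] by (simp add: algebra_simps)
qed

lemma essentially_cyclic_residual_summable:
  fixes x z :: "nat \<Rightarrow> real^'n"
  assumes upd: "\<And>k j. j \<in> U (Suc k) \<Longrightarrow> x (Suc k) $ j = z k $ j"
    and cyclic: "\<And>k j. \<exists>t\<in>{1..T}. j \<in> U (k + t)"
    and lip: "\<And>k l. norm (z k - z l) \<le> K * norm (x k - x l)" and K: "0 \<le> K"
    and steps: "summable (\<lambda>k. (norm (x (Suc k) - x k))\<^sup>2)"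
  shows "summable (\<lambda>k. (norm (x k - z k))\<^sup>2)"
proof (rule summable_comparison_test)
  define d where "d k = (norm (x (Suc k) - x k))\<^sup>2" for k
  define C where "C = (real CARD('n) * (2 + K))\<^sup>2 * real T"
  show "summable (\<lambda>k. C * (\<Sum>s<T. d (k + s)))"
    using steps unfolding d_def by (intro summable_mult summable_sum summable_ignore_initial_segment)
  have "(norm (x k - z k))\<^sup>2 \<le> C * (\<Sum>s<T. d (k + s))" for k
  proof -
    define E where "E = (\<Sum>s<T. norm (x (Suc (k + s)) - x (k + s)))"
    have "norm (x k - z k) \<le> (\<Sum>j\<in>UNIV. \<bar>(x k - z k) $ j\<bar>)"
      by (rule norm_le_l1_cart)
    also have "\<dots> \<le> real CARD('n) * ((2 + K) * E)"
      using sum_mono[of UNIV "\<lambda>j. \<bar>(x k - z k) $ j\<bar>" "\<lambda>_. (2 + K) * E"]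
        essentially_cyclic_coordinate_bound[where U=U and x=x and z=z and T=T and K=K,
          OF upd cyclic lip K, of k]
      by (simp add: E_def)
    finally have "(norm (x k - z k))\<^sup>2 \<le> (real CARD('n) * ((2 + K) * E))\<^sup>2"
      by (rule power_mono) simp
    also have "\<dots> = (real CARD('n) * (2 + K))\<^sup>2 * E\<^sup>2"
      by (simp add: power_mult_distrib)
    also have "E\<^sup>2 \<le> real T * (\<Sum>s<T. d (k + s))"
      using Cauchy_Schwarz_ineq_sum[of "\<lambda>s. norm (x (Suc (k + s)) - x (k + s))" "\<lambda>_. 1" "{..<T}"]
      by (simp add: E_def d_def mult.commute)
    finally show ?thesis
      by (simp add: C_def mult_left_mono mult.assoc)
  qed
  then show "\<exists>N. \<forall>k\<ge>N. norm ((norm (x k - z k))\<^sup>2) \<le> C * (\<Sum>s<T. d (k + s))"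
    by auto
qed

section \<open>The block forward-backward model\<close>

locale block_fb =
  fixes N :: nat and blk :: "'n::finite \<Rightarrow> nat"
    and f :: "nat \<Rightarrow> real^'n \<Rightarrow> real"
    and g :: "nat \<Rightarrow> real^'n \<Rightarrow> real^'n"
    and L gam :: "nat \<Rightarrow> real"
    and G :: "real^'n \<Rightarrow> ereal"
  assumes N_pos: "N \<ge> 1"
    and blk_range: "\<forall>j. blk j < N"
    and f_block: "\<forall>i<N. \<forall>w. f i w = f i (blkproj blk i w)"
    and f_grad: "\<forall>i<N. \<forall>w. (f i has_derivative (\<lambda>h. g i w \<bullet> h)) (at w)"
    and L_pos: "\<forall>i<N. L i > 0"
    and g_lip: "\<forall>i<N. \<forall>u v. norm (g i u - g i v) \<le> L i * norm (u - v)"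
    and gam: "\<forall>i<N. 0 < gam i \<and> gam i < real N / L i"
    and G_proper: "proper_fun G"
    and G_lsc: "lsc_fun G"
begin

abbreviation "P i \<equiv> blkproj blk i"
abbreviation "W \<equiv> sqnorm_Gam_inv blk gam"
abbreviation "F \<equiv> Fsum N f"
abbreviation "DF \<equiv> gradF N g"
abbreviation "Phi w \<equiv> ereal (F w) + G w"
abbreviation "FBE\<^sub>\<Gamma> \<equiv> FBE N blk gam f g G"
abbreviation "T\<^sub>\<Gamma> \<equiv> FB_op N blk gam g G"

definition Gam_isqrt :: "real^'n \<Rightarrow> real^'n" where
  "Gam_isqrt a = (\<chi> j. a $ j / sqrt (gam (blk j)))"

definition gmin :: real where "gmin = Min (range (\<lambda>j. gam (blk j)))"
definition gmax :: real where "gmax = Max (range (\<lambda>j. gam (blk j)))"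

lemma gam_pos: "gam (blk j) > 0"
  using gam blk_range by auto

lemma gmin_pos: "gmin > 0"
  unfolding gmin_def using gam_pos by (subst Min_gr_iff) auto

lemma gmin_le: "gmin \<le> gam (blk j)"
  unfolding gmin_def by (rule Min_le) auto

lemma gmax_ge: "gam (blk j) \<le> gmax"
  unfolding gmax_def by (rule Max_ge) auto

lemma gmax_pos: "gmax > 0"
  using gam_pos[of undefined] gmax_ge[of undefined] by linarith

lemma linear_Gam_isqrt: "linear Gam_isqrt"
  by (rule linearI) (auto simp: Gam_isqrt_def vec_eq_iff add_divide_distrib)

lemma norm_sq_cart: "(norm (a::real^'n))\<^sup>2 = (\<Sum>j\<in>UNIV. (a $ j)\<^sup>2)"
  unfolding power2_norm_eq_inner inner_vec_def by (simp add: power2_eq_square)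

lemma W_eq_norm_Gam_isqrt: "W a = (norm (Gam_isqrt a))\<^sup>2"
  unfolding norm_sq_cart sqnorm_Gam_inv_def Gam_isqrt_def
  using gam_pos by (simp add: power_divide less_imp_le)

lemma W_le_gmin: "W a \<le> (norm a)\<^sup>2 / gmin"
  unfolding sqnorm_Gam_inv_def norm_sq_cart sum_divide_distrib
  by (rule sum_mono) (simp add: frac_le gmin_pos gmin_le)

lemma gmax_le_W: "(norm a)\<^sup>2 / gmax \<le> W a"
  unfolding sqnorm_Gam_inv_def norm_sq_cart sum_divide_distrib
  by (rule sum_mono) (simp add: frac_le gam_pos gmax_ge)

lemma inner_Gam_isqrt_Gam_mul: "Gam_isqrt a \<bullet> Gam_isqrt (Gam_mul blk gam b) = a \<bullet> b"
proof -
  have "gam (blk j) * y / sqrt (gam (blk j)) * (x / sqrt (gam (blk j))) = x * y" for j x y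
    using gam_pos[of j] by (simp add: field_simps flip: power2_eq_square)
  then show ?thesis
    unfolding Gam_isqrt_def Gam_mul_def inner_vec_def by (simp add: mult.commute)
qed

lemma Gam_mul_diff: "Gam_mul blk gam (a - b) = Gam_mul blk gam a - Gam_mul blk gam b"
  by (simp add: Gam_mul_def vec_eq_iff algebra_simps)

lemma W_add_Gam_mul: "W (a + Gam_mul blk gam b) = W a + 2 * (a \<bullet> b) + W (Gam_mul blk gam b)"
  unfolding W_eq_norm_Gam_isqrt linear_add[OF linear_Gam_isqrt] power2_norm_eq_inner
  by (simp add: inner_add_left inner_add_right inner_Gam_isqrt_Gam_mul inner_commute)

lemma W_tendsto: "s \<longlonglongrightarrow> p \<Longrightarrow> (\<lambda>k. W (s k)) \<longlonglongrightarrow> W p"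
  unfolding sqnorm_Gam_inv_def using gam_pos
  by (intro tendsto_intros) (auto simp: less_imp_neq[symmetric])

definition blk_sqnorm :: "nat \<Rightarrow> real^'n \<Rightarrow> real" where
  "blk_sqnorm i a = (\<Sum>j\<in>{j. blk j = i}. (a $ j)\<^sup>2)"

definition fb_model :: "real^'n \<Rightarrow> real^'n \<Rightarrow> real" where
  "fb_model x w = F x + DF x \<bullet> (w - x) + W (w - x) / 2"

definition fb_obj :: "real^'n \<Rightarrow> real^'n \<Rightarrow> ereal" where
  "fb_obj x w = G w + ereal (fb_model x w)"

definition blk_model :: "nat \<Rightarrow> real^'n \<Rightarrow> real^'n \<Rightarrow> real" where
  "blk_model i x w = (f i x + g i x \<bullet> (w - x)) / real N + blk_sqnorm i (w - x) / (2 * gam i)"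

definition blk_modulus :: "nat \<Rightarrow> real" where
  "blk_modulus i = 1 / (2 * gam i) - L i / (2 * real N)"

definition min_modulus :: real where
  "min_modulus = Min (blk_modulus ` {..<N})"

lemma blkproj_diff: "P i (a - b) = P i a - P i b"
  by (simp add: blkproj_def vec_eq_iff)

lemma grad_blkproj:
  assumes i: "i < N" shows "g i w \<bullet> h = g i (P i w) \<bullet> P i h"
proof -
  have lin: "linear (P i)"
    by (rule linearI) (auto simp: blkproj_def vec_eq_iff)
  have "((\<lambda>w. f i (P i w)) has_derivative (\<lambda>h. g i (P i w) \<bullet> P i h)) (at w)"
    using has_derivative_compose[OF linear_imp_has_derivative[OF lin] f_grad[rule_format, OF i]]
    by simp
  moreover have "f i = (\<lambda>w. f i (P i w))"
    using f_block i by blast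
  ultimately have "(f i has_derivative (\<lambda>h. g i (P i w) \<bullet> P i h)) (at w)"
    by simp
  from has_derivative_unique[OF f_grad[rule_format, OF i] this] show ?thesis
    by meson
qed

lemma f_quadratic_bounds:
  assumes "i < N"
  shows "f i y \<le> f i x + g i x \<bullet> (y - x) + L i / 2 * (norm (y - x))\<^sup>2"
    and "f i x + g i x \<bullet> (y - x) - L i / 2 * (norm (y - x))\<^sup>2 \<le> f i y"
  using lipschitz_gradient_quadratic_bounds[of "f i" "g i" "L i"] f_grad g_lip assms by blast+

lemma f_descent_blkproj:
  assumes i: "i < N"
  shows "f i y \<le> f i x + g i x \<bullet> (y - x) + L i / 2 * (norm (P i (y - x)))\<^sup>2"
proof -
  have "f i y = f i (P i y)" "f i x = f i (P i x)"
    using f_block i by blast+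
  moreover have "g i x \<bullet> (y - x) = g i (P i x) \<bullet> (P i y - P i x)"
    using grad_blkproj[OF i] blkproj_diff by metis
  ultimately show ?thesis
    using f_quadratic_bounds(1)[OF i, of "P i y" "P i x"] by (simp add: blkproj_diff)
qed

lemma sum_blocks: "(\<Sum>j\<in>UNIV. h j) = (\<Sum>i<N. \<Sum>j\<in>{j. blk j = i}. h j)"
proof -
  have "blk ` UNIV \<subseteq> {..<N}"
    using blk_range by auto
  from sum.group[OF _ _ this, of h] show ?thesis
    by simp
qed

lemma blk_sqnorm_nonneg: "blk_sqnorm i a \<ge> 0"
  by (simp add: blk_sqnorm_def sum_nonneg)

lemma norm_blkproj_sq: "(norm (P i a))\<^sup>2 = blk_sqnorm i a"
proof -
  have "(\<Sum>j\<in>UNIV. ((P i a) $ j)\<^sup>2) = (\<Sum>j\<in>UNIV. if blk j = i then (a $ j)\<^sup>2 else 0)"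
    by (intro sum.cong) (auto simp: blkproj_def)
  then show ?thesis
    by (simp add: norm_sq_cart sum.If_cases blk_sqnorm_def Int_def)
qed

lemma norm_sq_blocks: "(norm a)\<^sup>2 = (\<Sum>i<N. blk_sqnorm i a)"
  unfolding norm_sq_cart blk_sqnorm_def by (rule sum_blocks)

lemma W_blocks: "W a = (\<Sum>i<N. blk_sqnorm i a / gam i)"
proof -
  have "W a = (\<Sum>i<N. \<Sum>j\<in>{j. blk j = i}. (a $ j)\<^sup>2 / gam (blk j))"
    unfolding sqnorm_Gam_inv_def by (rule sum_blocks)
  also have "\<dots> = (\<Sum>i<N. blk_sqnorm i a / gam i)"
    unfolding blk_sqnorm_def sum_divide_distrib by (intro sum.cong) auto
  finally show ?thesis .
qed

lemma blk_modulus_pos: "i < N \<Longrightarrow> blk_modulus i > 0"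
  using gam L_pos N_pos by (simp add: blk_modulus_def field_simps)

lemma min_modulus_pos: "min_modulus > 0"
  unfolding min_modulus_def using blk_modulus_pos N_pos
  by (subst Min_gr_iff) (auto simp: lessThan_empty_iff)

lemma min_modulus_le: "i < N \<Longrightarrow> min_modulus \<le> blk_modulus i"
  unfolding min_modulus_def by (rule Min_le) auto

lemma F_sum: "F w = (\<Sum>i<N. f i w / real N)"
  by (simp add: Fsum_def sum_divide_distrib)

lemma DF_inner: "DF y \<bullet> d = (\<Sum>i<N. (g i y \<bullet> d) / real N)"
  by (simp add: gradF_def inner_sum_left sum_divide_distrib)

lemma fb_model_blocks: "fb_model x w = (\<Sum>i<N. blk_model i x w)"
  unfolding fb_model_def blk_model_def F_sum DF_inner W_blocks
  by (simp add: sum.distrib sum_divide_distrib add_divide_distrib mult.commute)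

lemma blk_model_lower:
  assumes i: "i < N"
  shows "f i w / real N + blk_modulus i * blk_sqnorm i (w - x) \<le> blk_model i x w"
proof -
  have descent: "f i w \<le> f i x + g i x \<bullet> (w - x) + L i / 2 * blk_sqnorm i (w - x)"
    using f_descent_blkproj[OF i, of w x] by (simp add: norm_blkproj_sq)
  have "f i w / real N \<le> (f i x + g i x \<bullet> (w - x)) / real N + L i / (2 * real N) * blk_sqnorm i (w - x)"
    using divide_right_mono[OF descent, of "real N"] by (simp add: add_divide_distrib)
  then show ?thesis
    by (simp add: blk_model_def blk_modulus_def algebra_simps)
qed

lemma fb_model_lower: "F w + min_modulus * (norm (w - x))\<^sup>2 \<le> fb_model x w"
proof -
  have "F w + min_modulus * (norm (w - x))\<^sup>2
      = (\<Sum>i<N. f i w / real N + min_modulus * blk_sqnorm i (w - x))"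
    by (simp add: F_sum norm_sq_blocks sum.distrib sum_distrib_left)
  also have "\<dots> \<le> (\<Sum>i<N. blk_model i x w)"
  proof (rule sum_mono)
    fix i assume "i \<in> {..<N}"
    then have i: "i < N" by simp
    have "min_modulus * blk_sqnorm i (w - x) \<le> blk_modulus i * blk_sqnorm i (w - x)"
      using min_modulus_le[OF i] blk_sqnorm_nonneg by (rule mult_right_mono)
    with blk_model_lower[OF i, of w x]
    show "f i w / real N + min_modulus * blk_sqnorm i (w - x) \<le> blk_model i x w"
      by linarith
  qed
  finally show ?thesis
    by (simp add: fb_model_blocks)
qed

lemma FB_op_iff: "z \<in> T\<^sub>\<Gamma> x \<longleftrightarrow> (\<forall>v. fb_obj x z \<le> fb_obj x v)"
proof -
  define C where "C = W (Gam_mul blk gam (DF x)) / 2 - F x"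
  have assoc: "(X::ereal) + ereal a + ereal b = X + ereal (a + b)" for X a b
    by (cases X) auto
  have shift: "G w + ereal (W (w - (x - Gam_mul blk gam (DF x))) / 2) = fb_obj x w + ereal C" for w
  proof -
    have "W (w - (x - Gam_mul blk gam (DF x))) = W (w - x) + 2 * ((w - x) \<bullet> DF x) + W (Gam_mul blk gam (DF x))"
      using W_add_Gam_mul[of "w - x" "DF x"] by (simp add: algebra_simps)
    then have "W (w - (x - Gam_mul blk gam (DF x))) / 2 = fb_model x w + C"
      unfolding fb_model_def C_def by (simp add: inner_commute field_simps)
    then show ?thesis
      unfolding fb_obj_def by (simp only: assoc)
  qed
  show ?thesis
    unfolding FB_op_def prox_Gam_def shift by (simp add: ereal_add_le_add_iff2)
qed

lemma FBE_eq_INF_fb_obj: "FBE\<^sub>\<Gamma> x = (INF w. fb_obj x w)"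
proof -
  have "ereal a + X + ereal b = X + ereal (a + b)" for a b and X :: ereal
    by (cases X) auto
  then show ?thesis
    unfolding FBE_def fb_obj_def fb_model_def by (simp add: add.assoc)
qed

lemma FBE_le_fb_obj: "FBE\<^sub>\<Gamma> x \<le> fb_obj x w"
  unfolding FBE_eq_INF_fb_obj by (rule INF_lower) simp

lemma FBE_eq_fb_obj: "z \<in> T\<^sub>\<Gamma> x \<Longrightarrow> FBE\<^sub>\<Gamma> x = fb_obj x z"
  unfolding FBE_eq_INF_fb_obj FB_op_iff by (rule antisym) (auto intro: INF_lower INF_greatest)

lemma G_not_MInf: "G w \<noteq> -\<infinity>"
  using G_proper by (simp add: proper_fun_def)

lemma G_finite_at_FB_op:
  assumes "z \<in> T\<^sub>\<Gamma> x" obtains a where "G z = ereal a"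
proof -
  obtain v where "G v \<noteq> \<infinity>"
    using G_proper by (auto simp: proper_fun_def)
  then have "fb_obj x v \<noteq> \<infinity>"
    unfolding fb_obj_def by simp
  moreover have "fb_obj x z \<le> fb_obj x v"
    using assms FB_op_iff by blast
  ultimately have "fb_obj x z \<noteq> \<infinity>"
    by (metis ereal_infty_less_eq(1))
  then have "G z \<noteq> \<infinity>"
    unfolding fb_obj_def by auto
  then show ?thesis
    using that G_not_MInf[of z] by (cases "G z") auto
qed

lemma blk_model_update:
  assumes i: "i < N"
    and xp: "\<And>j. xp $ j = (if blk j \<in> I then z $ j else x $ j)"
  shows "blk_model i xp z + (if i \<in> I then min_modulus * blk_sqnorm i (z - x) else 0) \<le> blk_model i x z"
proof (cases "i \<in> I")
  case True
  have "P i xp = P i z" "P i (z - xp) = 0"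
    using True by (auto simp: blkproj_def xp vec_eq_iff)
  then have "f i xp = f i z" "g i xp \<bullet> (z - xp) = 0"
    using f_block grad_blkproj[OF i, of xp "z - xp"] i by (metis, simp)
  moreover have "blk_sqnorm i (z - xp) = 0"
    unfolding blk_sqnorm_def using True by (auto simp: xp intro!: sum.neutral)
  moreover have "min_modulus * blk_sqnorm i (z - x) \<le> blk_modulus i * blk_sqnorm i (z - x)"
    using min_modulus_le[OF i] blk_sqnorm_nonneg by (rule mult_right_mono)
  ultimately show ?thesis
    using blk_model_lower[OF i, of z x] True by (simp add: blk_model_def)
next
  case False
  have "P i xp = P i x" "P i (z - xp) = P i (z - x)"
    using False by (auto simp: blkproj_def xp vec_eq_iff)
  then have "f i xp = f i x" "g i xp \<bullet> (z - xp) = g i x \<bullet> (z - x)"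
    using f_block grad_blkproj[OF i] i by metis+
  moreover have "blk_sqnorm i (z - xp) = blk_sqnorm i (z - x)"
    unfolding blk_sqnorm_def using False by (auto simp: xp intro!: sum.cong)
  ultimately show ?thesis
    using False by (simp add: blk_model_def)
qed

lemma fb_model_update_decrease:
  assumes xp: "\<And>j. xp $ j = (if blk j \<in> I then z $ j else x $ j)"
  shows "fb_model xp z + min_modulus * (norm (xp - x))\<^sup>2 \<le> fb_model x z"
proof -
  have upd: "blk_sqnorm i (xp - x) = (if i \<in> I then blk_sqnorm i (z - x) else 0)" for i
    unfolding blk_sqnorm_def by (auto simp: xp intro!: sum.cong sum.neutral)
  have "fb_model xp z + min_modulus * (norm (xp - x))\<^sup>2
      = (\<Sum>i<N. blk_model i xp z + (if i \<in> I then min_modulus * blk_sqnorm i (z - x) else 0))"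
    unfolding fb_model_blocks norm_sq_blocks sum.distrib sum_distrib_left upd by (simp add: if_distrib cong: if_cong)
  also have "\<dots> \<le> (\<Sum>i<N. blk_model i x z)"
    using blk_model_update[OF _ xp] by (intro sum_mono) simp
  finally show ?thesis
    by (simp add: fb_model_blocks)
qed

lemma FBE_block_update_decrease:
  assumes z: "z \<in> T\<^sub>\<Gamma> x"
    and xp: "\<And>j. xp $ j = (if blk j \<in> I then z $ j else x $ j)"
  shows "FBE\<^sub>\<Gamma> xp + ereal (min_modulus * (norm (xp - x))\<^sup>2) \<le> FBE\<^sub>\<Gamma> x"
proof -
  obtain a where a: "G z = ereal a"
    using G_finite_at_FB_op[OF z] .
  have "FBE\<^sub>\<Gamma> xp + ereal (min_modulus * (norm (xp - x))\<^sup>2)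
      \<le> fb_obj xp z + ereal (min_modulus * (norm (xp - x))\<^sup>2)"
    using FBE_le_fb_obj by (rule add_right_mono)
  also have "\<dots> \<le> fb_obj x z"
    using fb_model_update_decrease[OF xp] by (simp add: fb_obj_def a)
  also have "\<dots> = FBE\<^sub>\<Gamma> x"
    using FBE_eq_fb_obj[OF z] by simp
  finally show ?thesis .
qed

definition model_gap :: real where
  "model_gap = (\<Sum>i<N. L i) / (2 * real N) + 1 / (2 * gmin)"

lemma model_gap_pos: "model_gap > 0"
  unfolding model_gap_def using L_pos N_pos gmin_pos
  by (intro add_nonneg_pos divide_nonneg_pos sum_nonneg) (auto simp: less_imp_le)

lemma F_linearization_lower:
  "F x + DF x \<bullet> (w - x) - (\<Sum>i<N. L i) / (2 * real N) * (norm (w - x))\<^sup>2 \<le> F w"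
proof -
  define n where "n = (norm (w - x))\<^sup>2"
  have "(\<Sum>i<N. L i) / (2 * real N) * n = (\<Sum>i<N. L i / 2 * n / real N)"
    unfolding sum_divide_distrib sum_distrib_right by (rule sum.cong) auto
  then have "F x + DF x \<bullet> (w - x) - (\<Sum>i<N. L i) / (2 * real N) * n
      = (\<Sum>i<N. (f i x + g i x \<bullet> (w - x) - L i / 2 * n) / real N)"
    by (simp add: F_sum DF_inner sum.distrib sum_subtractf diff_divide_distrib add_divide_distrib)
  also have "\<dots> \<le> (\<Sum>i<N. f i w / real N)"
    using f_quadratic_bounds(2) by (intro sum_mono divide_right_mono) (auto simp: n_def)
  finally show ?thesis
    by (simp add: F_sum n_def)
qed

lemma fb_model_upper: "fb_model x w \<le> F w + model_gap * (norm (w - x))\<^sup>2"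
  using F_linearization_lower[of x w] W_le_gmin[of "w - x"]
  unfolding fb_model_def model_gap_def by (simp add: distrib_right)

lemma fb_model_self: "fb_model x x = F x"
  by (simp add: fb_model_def sqnorm_Gam_inv_def)

lemma F_tendsto: "s \<longlonglongrightarrow> p \<Longrightarrow> (\<lambda>k. F (s k)) \<longlonglongrightarrow> F p"
  unfolding Fsum_def
  by (intro tendsto_intros isCont_tendsto_compose[of p "f _"])
     (auto intro: has_derivative_continuous f_grad[rule_format])

lemma g_continuous: "i < N \<Longrightarrow> continuous_on UNIV (g i)"
  using g_lip L_pos
  by (intro lipschitz_on_continuous_on[of "L i"] lipschitz_onI) (auto simp: dist_norm less_imp_le)

lemma DF_tendsto: "s \<longlonglongrightarrow> p \<Longrightarrow> (\<lambda>k. DF (s k)) \<longlonglongrightarrow> DF p"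
  unfolding gradF_def using g_continuous
  by (intro tendsto_intros isCont_tendsto_compose[of p "g _"]) (auto simp: continuous_on_eq_continuous_at)

lemma fb_model_tendsto:
  "s \<longlonglongrightarrow> p \<Longrightarrow> t \<longlonglongrightarrow> r \<Longrightarrow> (\<lambda>k. fb_model (s k) (t k)) \<longlonglongrightarrow> fb_model p r"
  unfolding fb_model_def by (intro tendsto_intros F_tendsto DF_tendsto W_tendsto) auto

lemma FB_op_graph_closed:
  assumes x: "x \<longlonglongrightarrow> p" and z: "z \<longlonglongrightarrow> q" and step: "\<And>k. z k \<in> T\<^sub>\<Gamma> (x k)"
  shows "q \<in> T\<^sub>\<Gamma> p"
  unfolding FB_op_iff
proof
  fix v
  show "fb_obj p q \<le> fb_obj p v"
  proof (cases "G v")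
    case (real b)
    have "G (z k) \<le> ereal (b + fb_model (x k) v - fb_model (x k) (z k))" for k
    proof -
      obtain a where a: "G (z k) = ereal a"
        using G_finite_at_FB_op[OF step] .
      have "fb_obj (x k) (z k) \<le> fb_obj (x k) v"
        using step FB_op_iff by blast
      with a real show ?thesis
        by (simp add: fb_obj_def)
    qed
    moreover have "(\<lambda>k. b + fb_model (x k) v - fb_model (x k) (z k)) \<longlonglongrightarrow> b + fb_model p v - fb_model p q"
      by (intro tendsto_intros fb_model_tendsto x z)
    ultimately have "G q \<le> ereal (b + fb_model p v - fb_model p q)"
      by (rule lsc_fun_tendsto_le[OF G_lsc z])
    then show ?thesis
      unfolding fb_obj_def using real by (cases "G q") auto
  qed (auto simp: fb_obj_def G_not_MInf)
qed

lemma FB_op_fixed_point_stationary: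
  assumes p: "p \<in> T\<^sub>\<Gamma> p"
  shows "FBE\<^sub>\<Gamma> p = Phi p" and "0 \<in> frechet_subdiff Phi p"
proof -
  obtain a where a: "G p = ereal a"
    using G_finite_at_FB_op[OF p] .
  show "FBE\<^sub>\<Gamma> p = Phi p"
    using FBE_eq_fb_obj[OF p] by (simp add: fb_obj_def fb_model_self add.commute)
  have quad: "Phi p \<le> Phi y + ereal (model_gap * (norm (y - p))\<^sup>2)" for y
  proof (cases "G y")
    case (real b)
    have "fb_obj p p \<le> fb_obj p y"
      using p FB_op_iff by blast
    then have "a + F p \<le> b + fb_model p y"
      by (simp add: fb_obj_def a real fb_model_self)
    with fb_model_upper[of p y] show ?thesis
      by (simp add: a real)
  qed (auto simp: G_not_MInf)
  show "0 \<in> frechet_subdiff Phi p"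
    unfolding frechet_subdiff_def
  proof (intro CollectI conjI allI impI)
    show "\<bar>Phi p\<bar> \<noteq> \<infinity>"
      by (simp add: a)
    fix e :: real assume e: "e > 0"
    show "\<exists>d>0. \<forall>y. norm (y - p) < d \<longrightarrow> Phi p + ereal (0 \<bullet> (y - p) - e * norm (y - p)) \<le> Phi y"
    proof (intro exI conjI allI impI)
      show "e / model_gap > 0"
        using e model_gap_pos by simp
      fix y assume "norm (y - p) < e / model_gap"
      then have "model_gap * norm (y - p) \<le> e"
        using model_gap_pos by (simp add: field_simps)
      then have "model_gap * norm (y - p) * norm (y - p) \<le> e * norm (y - p)"
        by (rule mult_right_mono) simp
      then have "model_gap * (norm (y - p))\<^sup>2 \<le> e * norm (y - p)"
        by (simp add: power2_eq_square mult.assoc)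
      then show "Phi p + ereal (0 \<bullet> (y - p) - e * norm (y - p)) \<le> Phi y"
        using quad[of y] a by (cases "G y") (auto simp: G_not_MInf)
    qed
  qed
qed

lemma FBE_sandwich:
  assumes z: "z \<in> T\<^sub>\<Gamma> x"
  shows "Phi z + ereal (min_modulus * (norm (z - x))\<^sup>2) \<le> FBE\<^sub>\<Gamma> x"
    and "FBE\<^sub>\<Gamma> x \<le> Phi z + ereal (model_gap * (norm (z - x))\<^sup>2)"
proof -
  obtain a where a: "G z = ereal a"
    using G_finite_at_FB_op[OF z] .
  have FBE: "FBE\<^sub>\<Gamma> x = ereal (a + fb_model x z)"
    by (simp add: FBE_eq_fb_obj[OF z] fb_obj_def a)
  show "Phi z + ereal (min_modulus * (norm (z - x))\<^sup>2) \<le> FBE\<^sub>\<Gamma> x"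
    using fb_model_lower[of z x] by (simp add: FBE a)
  show "FBE\<^sub>\<Gamma> x \<le> Phi z + ereal (model_gap * (norm (z - x))\<^sup>2)"
    using fb_model_upper[of x z] by (simp add: FBE a)
qed

end

section \<open>Lipschitz continuity of the forward-backward operator\<close>

locale block_fb_convex = block_fb +
  assumes G_convex: "convex_ext G"
begin

text \<open>Nonexpansiveness of the prox in the metric \<open>\<Gamma>\<^sup>-\<^sup>1\<close>, converted to the Euclidean
  norm, composed with the Lipschitz forward step \<open>x - \<Gamma> \<nabla>F(x)\<close>.\<close>

definition lip_T :: real where
  "lip_T = sqrt (gmax / gmin) * (1 + gmax * (\<Sum>i<N. L i) / real N)"

lemma lip_T_nonneg: "lip_T \<ge> 0"
proof -
  have "(\<Sum>i<N. L i) \<ge> 0"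
    using L_pos by (intro sum_nonneg) (auto simp: less_imp_le)
  then show ?thesis
    unfolding lip_T_def using gmax_pos gmin_pos by simp
qed

lemma norm_Gam_mul_le: "norm (Gam_mul blk gam a) \<le> gmax * norm a"
proof -
  have "(norm (Gam_mul blk gam a))\<^sup>2 = (\<Sum>j\<in>UNIV. (gam (blk j))\<^sup>2 * (a $ j)\<^sup>2)"
    by (simp add: norm_sq_cart Gam_mul_def power_mult_distrib)
  also have "\<dots> \<le> (\<Sum>j\<in>UNIV. gmax\<^sup>2 * (a $ j)\<^sup>2)"
    using gam_pos gmax_ge by (intro sum_mono mult_right_mono power_mono) (auto simp: less_imp_le)
  also have "\<dots> = (gmax * norm a)\<^sup>2"
    by (simp add: norm_sq_cart sum_distrib_left power_mult_distrib)
  finally show ?thesis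
    using gmax_pos by (simp add: power2_le_iff_abs_le)
qed

lemma DF_lipschitz: "norm (DF a - DF b) \<le> (\<Sum>i<N. L i) / real N * norm (a - b)"
proof -
  have "norm (DF a - DF b) = norm (\<Sum>i<N. g i a - g i b) / real N"
    by (simp add: gradF_def sum_subtractf flip: scaleR_diff_right)
  also have "\<dots> \<le> (\<Sum>i<N. L i * norm (a - b)) / real N"
    using g_lip by (intro divide_right_mono order.trans[OF norm_sum sum_mono]) auto
  finally show ?thesis
    by (simp add: sum_distrib_right)
qed

lemma FB_op_lipschitz:
  assumes z1: "z1 \<in> T\<^sub>\<Gamma> x1" and z2: "z2 \<in> T\<^sub>\<Gamma> x2"
  shows "norm (z1 - z2) \<le> lip_T * norm (x1 - x2)"
proof -
  define u1 where "u1 = x1 - Gam_mul blk gam (DF x1)"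
  define u2 where "u2 = x2 - Gam_mul blk gam (DF x2)"
  obtain a1 a2 where a: "G z1 = ereal a1" "G z2 = ereal a2"
    using G_finite_at_FB_op z1 z2 by metis
  have prox: "\<forall>w. G z + ereal ((norm (Gam_isqrt (z - u)))\<^sup>2 / 2) \<le> G w + ereal ((norm (Gam_isqrt (w - u)))\<^sup>2 / 2)"
    if "z \<in> prox_Gam blk gam G u" for z u
    using that unfolding prox_Gam_def W_eq_norm_Gam_isqrt by blast
  have "norm (Gam_isqrt (z1 - z2)) \<le> norm (Gam_isqrt (u1 - u2))"
    using z1 z2 unfolding FB_op_def u1_def u2_def
    by (intro convex_prox_nonexpansive[OF G_convex linear_Gam_isqrt prox prox a])
  then have "W (z1 - z2) \<le> W (u1 - u2)"
    unfolding W_eq_norm_Gam_isqrt by (rule power_mono) simp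
  then have "(norm (z1 - z2))\<^sup>2 / gmax \<le> (norm (u1 - u2))\<^sup>2 / gmin"
    using gmax_le_W W_le_gmin by (meson order.trans)
  then have "(norm (z1 - z2))\<^sup>2 \<le> gmax / gmin * (norm (u1 - u2))\<^sup>2"
    using gmax_pos gmin_pos by (simp add: field_simps)
  also have "\<dots> = (sqrt (gmax / gmin) * norm (u1 - u2))\<^sup>2"
    using gmax_pos gmin_pos by (simp add: power_mult_distrib)
  finally have nz: "norm (z1 - z2) \<le> sqrt (gmax / gmin) * norm (u1 - u2)"
    by (rule power2_le_imp_le) (use gmax_pos gmin_pos in simp)
  have "norm (u1 - u2) \<le> norm (x1 - x2) + norm (Gam_mul blk gam (DF x1 - DF x2))"
    unfolding u1_def u2_def Gam_mul_diff
    using norm_triangle_ineq4[of "x1 - x2" "Gam_mul blk gam (DF x1) - Gam_mul blk gam (DF x2)"]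
    by (simp add: algebra_simps)
  also have "\<dots> \<le> norm (x1 - x2) + gmax * ((\<Sum>i<N. L i) / real N * norm (x1 - x2))"
    using norm_Gam_mul_le[of "DF x1 - DF x2"] mult_left_mono[OF DF_lipschitz[of x1 x2], of gmax] gmax_pos
    by linarith
  finally have "norm (u1 - u2) \<le> (1 + gmax * (\<Sum>i<N. L i) / real N) * norm (x1 - x2)"
    by (simp add: algebra_simps)
  then have "sqrt (gmax / gmin) * norm (u1 - u2) \<le> lip_T * norm (x1 - x2)"
    unfolding lip_T_def mult.assoc by (rule mult_left_mono) (use gmax_pos gmin_pos in simp)
  with nz show ?thesis
    by linarith
qed

end

section \<open>Iterates of the block-coordinate method\<close>

locale bc_iteration = block_fb_convex +
  fixes x z and I :: "nat \<Rightarrow> nat set" and T :: nat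
  assumes argmin_ne: "\<exists>w. \<forall>v. ereal (Fsum N f w) + G w \<le> ereal (Fsum N f v) + G v"
    and z_step: "\<forall>k. z k \<in> FB_op N blk gam g G (x k)"
    and x_upd: "\<forall>k j. x (Suc k) $ j = (if blk j \<in> I (Suc k) then z k $ j else x k $ j)"
    and ess_cyclic: "\<forall>k. \<forall>i<N. \<exists>t\<in>{1..T}. i \<in> I (k + t)"
begin

definition fbe_val :: "nat \<Rightarrow> real" where
  "fbe_val k = real_of_ereal (FBE\<^sub>\<Gamma> (x k))"

definition Phi_z :: "nat \<Rightarrow> real" where
  "Phi_z k = real_of_ereal (Phi (z k))"

definition Phi_star :: real where
  "Phi_star = lim fbe_val"

lemma FBE_iterate: "FBE\<^sub>\<Gamma> (x k) = ereal (fbe_val k)"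
  and Phi_iterate: "Phi (z k) = ereal (Phi_z k)"
proof -
  obtain a where "G (z k) = ereal a"
    using G_finite_at_FB_op z_step by blast
  then show "Phi (z k) = ereal (Phi_z k)" and "FBE\<^sub>\<Gamma> (x k) = ereal (fbe_val k)"
    using FBE_eq_fb_obj[of "z k" "x k"] z_step by (simp_all add: Phi_z_def fbe_val_def fb_obj_def)
qed

lemma fbe_val_le_Phi_z: "fbe_val k \<le> Phi_z k + model_gap * (norm (x k - z k))\<^sup>2"
  and Phi_z_le_fbe_val: "Phi_z k \<le> fbe_val k"
proof -
  note sandwich = FBE_sandwich[OF z_step[rule_format, of k]]
  show "fbe_val k \<le> Phi_z k + model_gap * (norm (x k - z k))\<^sup>2"
    using sandwich(2) by (simp add: FBE_iterate Phi_iterate norm_minus_commute)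
  have "0 \<le> min_modulus * (norm (z k - x k))\<^sup>2"
    using min_modulus_pos by simp
  then show "Phi_z k \<le> fbe_val k"
    using sandwich(1) by (simp add: FBE_iterate Phi_iterate)
qed

lemma fbe_val_decrease: "fbe_val (Suc k) + min_modulus * (norm (x (Suc k) - x k))\<^sup>2 \<le> fbe_val k"
  using FBE_block_update_decrease[OF z_step[rule_format, of k], of "x (Suc k)" "I (Suc k)"] x_upd
  by (simp add: FBE_iterate)

lemma Phi_min: obtains m where "\<And>v. ereal m \<le> Phi v" and "(INF v. Phi v) = ereal m"
proof -
  obtain w where w: "\<And>v. Phi w \<le> Phi v"
    using argmin_ne by blast
  have "Phi w \<noteq> \<infinity>"
    using w[of "z 0"] Phi_iterate[of 0] by auto
  moreover have "Phi w \<noteq> -\<infinity>"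
    using G_not_MInf[of w] by simp
  moreover have "(INF v. Phi v) = Phi w"
    using w by (intro antisym INF_lower INF_greatest) auto
  ultimately show ?thesis
    using that w by (cases "Phi w") auto
qed

lemma fbe_val_tendsto: "fbe_val \<longlonglongrightarrow> Phi_star"
  and steps_summable: "summable (\<lambda>k. (norm (x (Suc k) - x k))\<^sup>2)"
  and INF_Phi_le: "(INF w. Phi w) \<le> ereal Phi_star"
proof -
  obtain m where m: "\<And>v. ereal m \<le> Phi v" and INF_m: "(INF v. Phi v) = ereal m"
    using Phi_min by blast
  have bdd: "m \<le> fbe_val k" for k
    using m[of "z k"] Phi_z_le_fbe_val[of k] by (simp add: Phi_iterate)
  note summable = decreasing_bounded_below_summable[where d="\<lambda>k. (norm (x (Suc k) - x k))\<^sup>2",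
      OF fbe_val_decrease min_modulus_pos zero_le_power2 bdd]
  show lim: "fbe_val \<longlonglongrightarrow> Phi_star"
    using summable(1) by (simp add: Phi_star_def convergent_LIMSEQ_iff)
  show "summable (\<lambda>k. (norm (x (Suc k) - x k))\<^sup>2)"
    using summable(2) by simp
  have "m \<le> Phi_star"
    using LIMSEQ_le_const[OF lim] bdd by blast
  then show "(INF w. Phi w) \<le> ereal Phi_star"
    by (simp add: INF_m)
qed

lemma residual_summable: "summable (\<lambda>k. (norm (x k - z k))\<^sup>2)"
proof (rule essentially_cyclic_residual_summable[OF _ _ _ lip_T_nonneg steps_summable])
  show "x (Suc k) $ j = z k $ j" if "j \<in> {j. blk j \<in> I (Suc k)}" for k j
    using that x_upd by simp
  show "\<exists>t\<in>{1..T}. j \<in> {j. blk j \<in> I (k + t)}" for k j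
    using ess_cyclic blk_range by simp
  show "norm (z k - z l) \<le> lip_T * norm (x k - x l)" for k l
    using FB_op_lipschitz z_step by blast
qed

lemma residual_tendsto_zero: "(\<lambda>k. x k - z k) \<longlonglongrightarrow> 0"
proof -
  have "(\<lambda>k. sqrt ((norm (x k - z k))\<^sup>2)) \<longlonglongrightarrow> sqrt 0"
    by (intro tendsto_real_sqrt summable_LIMSEQ_zero[OF residual_summable])
  then show ?thesis
    by (simp add: tendsto_norm_zero_iff)
qed

lemma Phi_z_tendsto: "Phi_z \<longlonglongrightarrow> Phi_star"
proof (rule tendsto_sandwich[OF _ _ _ fbe_val_tendsto])
  have "(\<lambda>k. (norm (x k - z k))\<^sup>2) \<longlonglongrightarrow> 0"
    by (rule summable_LIMSEQ_zero[OF residual_summable])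
  then show "(\<lambda>k. fbe_val k - model_gap * (norm (x k - z k))\<^sup>2) \<longlonglongrightarrow> Phi_star"
    using tendsto_diff[OF fbe_val_tendsto tendsto_mult_right_zero] by fastforce
  show "\<forall>\<^sub>F k in sequentially. fbe_val k - model_gap * (norm (x k - z k))\<^sup>2 \<le> Phi_z k"
    using fbe_val_le_Phi_z by (simp add: algebra_simps)
  show "\<forall>\<^sub>F k in sequentially. Phi_z k \<le> fbe_val k"
    using Phi_z_le_fbe_val by simp
qed

lemma FBE_iterates_tendsto: "(\<lambda>k. FBE\<^sub>\<Gamma> (x k)) \<longlonglongrightarrow> ereal Phi_star"
  using fbe_val_tendsto by (simp add: FBE_iterate)

lemma Phi_iterates_tendsto: "(\<lambda>k. Phi (z k)) \<longlonglongrightarrow> ereal Phi_star"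
  using Phi_z_tendsto by (simp add: Phi_iterate)

lemma cluster_point_stationary:
  assumes p: "p \<in> cluster_points x"
  shows "0 \<in> frechet_subdiff Phi p" and "Phi p = ereal Phi_star" and "FBE\<^sub>\<Gamma> p = ereal Phi_star"
proof -
  obtain r where r: "strict_mono r" and xr: "(\<lambda>k. x (r k)) \<longlonglongrightarrow> p" and zr: "(\<lambda>k. z (r k)) \<longlonglongrightarrow> p"
    using cluster_point_common_subseq[OF residual_tendsto_zero p] .
  have fixed: "p \<in> T\<^sub>\<Gamma> p"
    using FB_op_graph_closed[OF xr zr] z_step by blast
  obtain a where a: "G p = ereal a"
    using G_finite_at_FB_op[OF fixed] .
  have "(\<lambda>k. Phi_z (r k) - F (z (r k))) \<longlonglongrightarrow> Phi_star - F p"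
    using LIMSEQ_subseq_LIMSEQ[OF Phi_z_tendsto r] F_tendsto[OF zr] by (intro tendsto_diff) (simp_all add: o_def)
  moreover have "G (z (r k)) \<le> ereal (Phi_z (r k) - F (z (r k)))" for k
    using Phi_iterate[of "r k"] by (cases "G (z (r k))") auto
  ultimately have "G p \<le> ereal (Phi_star - F p)"
    by (intro lsc_fun_tendsto_le[OF G_lsc zr])
  moreover have "Phi_star \<le> a + F p"
  proof (rule LIMSEQ_le)
    show "(\<lambda>k. fbe_val (r k)) \<longlonglongrightarrow> Phi_star"
      using LIMSEQ_subseq_LIMSEQ[OF fbe_val_tendsto r] by (simp add: o_def)
    have "(\<lambda>k. fb_model (x (r k)) p) \<longlonglongrightarrow> F p"
      using fb_model_tendsto[OF xr tendsto_const[of p]] by (simp add: fb_model_self)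
    then show "(\<lambda>k. a + fb_model (x (r k)) p) \<longlonglongrightarrow> a + F p"
      by (intro tendsto_add tendsto_const)
    have "fbe_val k \<le> a + fb_model (x k) p" for k
      using FBE_le_fb_obj[of "x k" p] by (simp add: FBE_iterate fb_obj_def a)
    then show "\<exists>K. \<forall>k\<ge>K. fbe_val (r k) \<le> a + fb_model (x (r k)) p"
      by blast
  qed
  ultimately show "Phi p = ereal Phi_star"
    by (simp add: a)
  with FB_op_fixed_point_stationary[OF fixed]
  show "0 \<in> frechet_subdiff Phi p" and "FBE\<^sub>\<Gamma> p = ereal Phi_star"
    by simp_all
qed

end

theorem theorem2p8:
  fixes N :: nat
    and blk :: "'n::finite \<Rightarrow> nat"
    and f :: "nat \<Rightarrow> real^'n \<Rightarrow> real"
    and g :: "nat \<Rightarrow> real^'n \<Rightarrow> real^'n"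
    and L gam :: "nat \<Rightarrow> real"
    and G :: "real^'n \<Rightarrow> ereal"
    and x z :: "nat \<Rightarrow> real^'n"
    and I :: "nat \<Rightarrow> nat set"
    and T :: nat
  defines "\<Phi> \<equiv> (\<lambda>w. ereal (Fsum N f w) + G w)"
  assumes N_pos: "N \<ge> 1"
    and blk_range: "\<forall>j. blk j < N"
    and blk_nonempty: "\<forall>i<N. \<exists>j. blk j = i"
    and f_block: "\<forall>i<N. \<forall>w. f i w = f i (blkproj blk i w)"
    and f_grad: "\<forall>i<N. \<forall>w. (f i has_derivative (\<lambda>h. g i w \<bullet> h)) (at w)"
    and L_pos: "\<forall>i<N. L i > 0"
    and g_lip: "\<forall>i<N. \<forall>u v. norm (g i u - g i v) \<le> L i * norm (u - v)"
    and gam: "\<forall>i<N. 0 < gam i \<and> gam i < real N / L i"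
    and G_proper: "proper_fun G"
    and G_lsc: "lsc_fun G"
    and G_convex: "convex_ext G"
    and argmin_ne: "\<exists>w. \<forall>v. \<Phi> w \<le> \<Phi> v"
    and z_step: "\<forall>k. z k \<in> FB_op N blk gam g G (x k)"
    and I_sub: "\<forall>k. I (Suc k) \<subseteq> {..<N}"
    and x_upd: "\<forall>k j. x (Suc k) $ j = (if blk j \<in> I (Suc k) then z k $ j else x k $ j)"
    and T_pos: "T \<ge> 1"
    and ess_cyclic: "\<forall>k. \<forall>i<N. \<exists>t\<in>{1..T}. i \<in> I (k + t)"
  shows "summable (\<lambda>k. (norm (x k - z k))^2)
     \<and> (\<exists>\<Phi>star::real.
          (\<lambda>k. FBE N blk gam f g G (x k)) \<longlonglongrightarrow> ereal \<Phi>star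
        \<and> (\<lambda>k. \<Phi> (z k)) \<longlonglongrightarrow> ereal \<Phi>star
        \<and> (INF w. \<Phi> w) \<le> ereal \<Phi>star
        \<and> cluster_points x = cluster_points z
        \<and> (\<forall>p\<in>cluster_points x. 0 \<in> frechet_subdiff \<Phi> p
              \<and> \<Phi> p = ereal \<Phi>star
              \<and> FBE N blk gam f g G p = ereal \<Phi>star))"
proof -
  have argmin: "\<exists>w. \<forall>v. ereal (Fsum N f w) + G w \<le> ereal (Fsum N f v) + G v"
    using argmin_ne by (simp add: \<Phi>_def)
  interpret bc_iteration N blk f g L gam G x z I T
    by (unfold_locales; fact argmin assms)
  show ?thesis
    unfolding \<Phi>_def
    using residual_summable FBE_iterates_tendsto Phi_iterates_tendsto INF_Phi_le
      cluster_points_eq_if_diff_tendsto_zero[OF residual_tendsto_zero] cluster_point_stationary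
    by blast
qed

end
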